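(* Let $\Sigma=(I,X,\mathcal U,\phi,Y,h)$ be a forward complete control system with outputs. Then the following are equivalent: (1) $\Sigma$ is IOS and OL; (2) $\Sigma$ is OUAG, OL, and $h$ is $\mathcal K$-bounded; (3) $\Sigma$ is OULIM, OL, and $h$ is $\mathcal K$-bounded.
   Context: Let $I\in\{\mathbb N_0,\mathbb R_0^+\}$. A forward complete control system with outputs $\Sigma=(I,X,\mathcal U,\phi,Y,h)$ consists of: a normed space $(X,\|\cdot\|_X)$; a vector space $U$ and a normed linear subspace $(\mathcal U,\|\cdot\|_{\mathcal U})$ of $\{u:I\to U\}$ such that for all $u\in\mathcal U,\tau\in I$, $u(\cdot+\tau)\in\mathcal U$ with $\|u(\cdot+\tau)\|_{\mathcal U}\le\|u\|_{\mathcal U}$, and for $t_2\ge t_1\ge 0$ the function $u|_{[t_1,t_2]}$ ($u$ on $[t_1,t_2]$, $0$ elsewhere) lies in $\mathcal U$ with norm $\le\|u\|_{\mathcal U}$; a map $\phi:I\times X\times\mathcal U\to X$ with $\phi(0,x,u)=x$, causality (if $u,\tilde u$ agree on $[0,t]$ then $\phi(t,x,u)=\phi(t,x,\tilde u)$), and cocycle property $\phi(t+s,x,u)=\phi(s,\phi(t,x,u),u(t+\cdot))$; a normed space $Y$ and $h:X\times U\to Y$. Write $y(t,x,u)=h(\phi(t,x,u),u(t))$, $B_r=\{x:\|x\|_X<r\}$, $B_{r,\mathcal U}=\{u:\|u\|_{\mathcal U}<r\}$. $\mathcal K,\mathcal K_\infty,\mathcal{KL}$ are the standard comparison function classes. IOS: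 $\exists\beta\in\mathcal{KL},\gamma\in\mathcal K_\infty$ with $\|y(t,x,u)\|_Y\le\beta(\|x\|_X,t)+\gamma(\|u\|_{\mathcal U})$ for all $x\in X,u\in\mathcal U,t\in I$. OL: $\exists\sigma,\gamma\in\mathcal K_\infty$ with $\|y(t,x,u)\|_Y\le\sigma(\|y(0,x,u)\|_Y)+\gamma(\|u\|_{\mathcal U})$ for all $x,u,t$. OUAG: $\exists\gamma\in\mathcal K_\infty$ such that for all $\varepsilon,r,s>0$ there is $\tau\in I$ with $\|y(t,x,u)\|_Y\le\varepsilon+\gamma(\|u\|_{\mathcal U})$ for all $x\in B_r,u\in B_{s,\mathcal U},t\ge\tau$. OULIM: $\exists\gamma\in\mathcal K_\infty$ such that for all $\varepsilon,r,s>0$ there is $\tau\in I$ such that for all $x\in B_r,u\in B_{s,\mathcal U}$ there exists $t\in I$, $t\le\tau$, with $\|y(t,x,u)\|_Y\le\varepsilon+\gamma(\|u\|_{\mathcal U})$. $h$ is $\mathcal K$-bounded: there exist $\sigma_1,\gamma_1\in\mathcal K$ with $\|h(x,u(0))\|_Y\le\sigma_1(\|x\|_X)+\gamma_1(\|u\|_{\mathcal U})$ for all $x\in X$, $u\in\mathcal U$. *)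

theory Defs
  imports "HOL-Analysis.Analysis"
begin

definition class_K :: "(real \<Rightarrow> real) \<Rightarrow> bool" where
  "class_K \<gamma> \<longleftrightarrow> continuous_on {0..} \<gamma> \<and> \<gamma> 0 = 0 \<and> strict_mono_on {0..} \<gamma>"

definition class_Kinf :: "(real \<Rightarrow> real) \<Rightarrow> bool" where
  "class_Kinf \<gamma> \<longleftrightarrow> class_K \<gamma> \<and> filterlim \<gamma> at_top at_top"

definition class_L :: "(real \<Rightarrow> real) \<Rightarrow> bool" where
  "class_L \<gamma> \<longleftrightarrow> continuous_on {0..} \<gamma> \<and> strict_antimono_on {0..} \<gamma>
      \<and> (\<gamma> \<longlongrightarrow> 0) at_top"

definition class_KL :: "(real \<Rightarrow> real \<Rightarrow> real) \<Rightarrow> bool" where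
  "class_KL \<beta> \<longleftrightarrow> (\<forall>t\<ge>0. class_K (\<lambda>r. \<beta> r t)) \<and> (\<forall>r>0. class_L (\<lambda>t. \<beta> r t))"

text \<open>Time set T (either the naturals or the nonnegative reals, viewed inside the reals).
  Inputs are functions real => 'u that vanish outside T.\<close>

definition shift_inp :: "real set \<Rightarrow> real \<Rightarrow> (real \<Rightarrow> 'u::real_vector) \<Rightarrow> real \<Rightarrow> 'u" where
  "shift_inp T \<tau> u = (\<lambda>t. if t \<in> T then u (t + \<tau>) else 0)"

definition restr_inp :: "real set \<Rightarrow> real \<Rightarrow> real \<Rightarrow> (real \<Rightarrow> 'u::real_vector) \<Rightarrow> real \<Rightarrow> 'u" where
  "restr_inp T t1 t2 u = (\<lambda>t. if t \<in> T \<and> t1 \<le> t \<and> t \<le> t2 then u t else 0)"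

definition fc_control_system ::
  "real set \<Rightarrow> (real \<Rightarrow> 'u::real_vector) set \<Rightarrow> ((real \<Rightarrow> 'u) \<Rightarrow> real)
    \<Rightarrow> (real \<Rightarrow> 'x::real_normed_vector \<Rightarrow> (real \<Rightarrow> 'u) \<Rightarrow> 'x) \<Rightarrow> bool" where
  "fc_control_system T Uset nU \<phi> \<longleftrightarrow>
     (T = \<nat> \<or> T = {0..}) \<and>
     \<comment> \<open>inputs are functions on T (extended by 0)\<close>
     (\<forall>u\<in>Uset. \<forall>t. t \<notin> T \<longrightarrow> u t = 0) \<and>
     \<comment> \<open>Uset is a linear subspace, nU is a norm on it\<close>
     (\<lambda>t. 0) \<in> Uset \<and> (\<forall>u\<in>Uset. \<forall>v\<in>Uset. (\<lambda>t. u t + v t) \<in> Uset) \<and> (\<forall>a. \<forall>u\<in>Uset. (\<lambda>t. a *\<^sub>R u t) \<in> Uset) \<and>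
     (\<forall>u\<in>Uset. nU u \<ge> 0) \<and> (\<forall>u\<in>Uset. nU u = 0 \<longleftrightarrow> u = (\<lambda>t. 0)) \<and>
     (\<forall>a. \<forall>u\<in>Uset. nU (\<lambda>t. a *\<^sub>R u t) = \<bar>a\<bar> * nU u) \<and>
     (\<forall>u\<in>Uset. \<forall>v\<in>Uset. nU (\<lambda>t. u t + v t) \<le> nU u + nU v) \<and>
     \<comment> \<open>shift axiom\<close>
     (\<forall>u\<in>Uset. \<forall>\<tau>\<in>T. shift_inp T \<tau> u \<in> Uset \<and> nU (shift_inp T \<tau> u) \<le> nU u) \<and>
     \<comment> \<open>restriction axiom\<close>
     (\<forall>u\<in>Uset. \<forall>t1\<in>T. \<forall>t2\<in>T. t1 \<le> t2 \<longrightarrow>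
        restr_inp T t1 t2 u \<in> Uset \<and> nU (restr_inp T t1 t2 u) \<le> nU u) \<and>
     \<comment> \<open>identity property\<close>
     (\<forall>x. \<forall>u\<in>Uset. \<phi> 0 x u = x) \<and>
     \<comment> \<open>causality\<close>
     (\<forall>t\<in>T. \<forall>x. \<forall>u\<in>Uset. \<forall>v\<in>Uset. (\<forall>s\<in>T. s \<le> t \<longrightarrow> u s = v s) \<longrightarrow> \<phi> t x u = \<phi> t x v) \<and>
     \<comment> \<open>cocycle property\<close>
     (\<forall>t\<in>T. \<forall>s\<in>T. \<forall>x. \<forall>u\<in>Uset. \<phi> (t + s) x u = \<phi> s (\<phi> t x u) (shift_inp T t u))"

definition outp ::
  "(real \<Rightarrow> 'x \<Rightarrow> (real \<Rightarrow> 'u) \<Rightarrow> 'x) \<Rightarrow> ('x \<Rightarrow> 'u \<Rightarrow> 'y) \<Rightarrow> real \<Rightarrow> 'x \<Rightarrow> (real \<Rightarrow> 'u) \<Rightarrow> 'y" where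
  "outp \<phi> h t x u = h (\<phi> t x u) (u t)"

definition IOS :: "real set \<Rightarrow> (real \<Rightarrow> 'u::real_vector) set \<Rightarrow> ((real \<Rightarrow> 'u) \<Rightarrow> real)
    \<Rightarrow> (real \<Rightarrow> 'x::real_normed_vector \<Rightarrow> (real \<Rightarrow> 'u) \<Rightarrow> 'x) \<Rightarrow> ('x \<Rightarrow> 'u \<Rightarrow> 'y::real_normed_vector) \<Rightarrow> bool" where
  "IOS T Uset nU \<phi> h \<longleftrightarrow> (\<exists>\<beta> \<gamma>. class_KL \<beta> \<and> class_Kinf \<gamma> \<and>
     (\<forall>x. \<forall>u\<in>Uset. \<forall>t\<in>T. norm (outp \<phi> h t x u) \<le> \<beta> (norm x) t + \<gamma> (nU u)))"

definition OL :: "real set \<Rightarrow> (real \<Rightarrow> 'u::real_vector) set \<Rightarrow> ((real \<Rightarrow> 'u) \<Rightarrow> real)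
    \<Rightarrow> (real \<Rightarrow> 'x::real_normed_vector \<Rightarrow> (real \<Rightarrow> 'u) \<Rightarrow> 'x) \<Rightarrow> ('x \<Rightarrow> 'u \<Rightarrow> 'y::real_normed_vector) \<Rightarrow> bool" where
  "OL T Uset nU \<phi> h \<longleftrightarrow> (\<exists>\<sigma> \<gamma>. class_Kinf \<sigma> \<and> class_Kinf \<gamma> \<and>
     (\<forall>x. \<forall>u\<in>Uset. \<forall>t\<in>T. norm (outp \<phi> h t x u) \<le> \<sigma> (norm (outp \<phi> h 0 x u)) + \<gamma> (nU u)))"

definition OUAG :: "real set \<Rightarrow> (real \<Rightarrow> 'u::real_vector) set \<Rightarrow> ((real \<Rightarrow> 'u) \<Rightarrow> real)
    \<Rightarrow> (real \<Rightarrow> 'x::real_normed_vector \<Rightarrow> (real \<Rightarrow> 'u) \<Rightarrow> 'x) \<Rightarrow> ('x \<Rightarrow> 'u \<Rightarrow> 'y::real_normed_vector) \<Rightarrow> bool" where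
  "OUAG T Uset nU \<phi> h \<longleftrightarrow> (\<exists>\<gamma>. class_Kinf \<gamma> \<and>
     (\<forall>\<epsilon>>0. \<forall>r>0. \<forall>s>0. \<exists>\<tau>\<in>T. \<forall>x. \<forall>u\<in>Uset. \<forall>t\<in>T.
        norm x < r \<longrightarrow> nU u < s \<longrightarrow> t \<ge> \<tau> \<longrightarrow> norm (outp \<phi> h t x u) \<le> \<epsilon> + \<gamma> (nU u)))"

definition OULIM :: "real set \<Rightarrow> (real \<Rightarrow> 'u::real_vector) set \<Rightarrow> ((real \<Rightarrow> 'u) \<Rightarrow> real)
    \<Rightarrow> (real \<Rightarrow> 'x::real_normed_vector \<Rightarrow> (real \<Rightarrow> 'u) \<Rightarrow> 'x) \<Rightarrow> ('x \<Rightarrow> 'u \<Rightarrow> 'y::real_normed_vector) \<Rightarrow> bool" where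
  "OULIM T Uset nU \<phi> h \<longleftrightarrow> (\<exists>\<gamma>. class_Kinf \<gamma> \<and>
     (\<forall>\<epsilon>>0. \<forall>r>0. \<forall>s>0. \<exists>\<tau>\<in>T. \<forall>x. \<forall>u\<in>Uset.
        norm x < r \<longrightarrow> nU u < s \<longrightarrow>
        (\<exists>t\<in>T. t \<le> \<tau> \<and> norm (outp \<phi> h t x u) \<le> \<epsilon> + \<gamma> (nU u))))"

definition K_bounded :: "(real \<Rightarrow> 'u::real_vector) set \<Rightarrow> ((real \<Rightarrow> 'u) \<Rightarrow> real)
    \<Rightarrow> ('x::real_normed_vector \<Rightarrow> 'u \<Rightarrow> 'y::real_normed_vector) \<Rightarrow> bool" where
  "K_bounded Uset nU h \<longleftrightarrow> (\<exists>\<sigma>1 \<gamma>1. class_K \<sigma>1 \<and> class_K \<gamma>1 \<and>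
     (\<forall>x. \<forall>u\<in>Uset. norm (h x (u 0)) \<le> \<sigma>1 (norm x) + \<gamma>1 (nU u)))"

end

theory Submission
  imports Defs
begin

text \<open>Only (2) \<open>\<Longrightarrow>\<close> (1) and (3) \<open>\<Longrightarrow>\<close> (2) need work. For (2) \<open>\<Longrightarrow>\<close> (1), OL together with the
  \<open>\<K>\<close>-boundedness of \<open>h\<close> bounds the output by \<open>\<rho>(\<parallel>x\<parallel>) + \<kappa>(\<parallel>u\<parallel>)\<close>, and OUAG makes the
  excess \<open>\<parallel>y(t,x,u)\<parallel> - \<Gamma>(\<parallel>u\<parallel>)\<close> decay uniformly on bounded sets of initial states, for a
  suitable gain \<open>\<Gamma>\<close>. Any such uniformly decaying family is dominated by a \<open>\<K>\<L>\<close> function: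
  take suprema over the cells of an integer grid in \<open>(\<parallel>x\<parallel>, t)\<close> and interpolate them
  piecewise linearly in both variables. For (3) \<open>\<Longrightarrow>\<close> (2), once the output is small at some
  time \<open>t\<^sub>0 \<le> \<tau>\<close>, OL applied to the system restarted at \<open>t\<^sub>0\<close> (cocycle property) keeps it
  small for all later times.\<close>

section \<open>Comparison functions\<close>

lemma class_K_less: "class_K g \<Longrightarrow> 0 \<le> a \<Longrightarrow> a < b \<Longrightarrow> g a < g b"
  unfolding class_K_def monotone_on_def by auto

lemma class_K_mono: "class_K g \<Longrightarrow> 0 \<le> a \<Longrightarrow> a \<le> b \<Longrightarrow> g a \<le> g b"
  using class_K_less[of g a b] by (cases "a = b") auto

lemma class_K_nonneg: "class_K g \<Longrightarrow> 0 \<le> a \<Longrightarrow> 0 \<le> g a"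
  using class_K_mono[of g 0 a] by (simp add: class_K_def)

lemma class_Kinf_imp_class_K: "class_Kinf g \<Longrightarrow> class_K g"
  by (simp add: class_Kinf_def)

lemma class_K_compose:
  assumes f: "class_K f" and g: "class_K g"
  shows "class_K (\<lambda>r. f (g r))"
proof -
  have "g ` {0..} \<subseteq> {0..}" using class_K_nonneg[OF g] by auto
  then have "continuous_on {0..} (\<lambda>r. f (g r))"
    using continuous_on_compose2[of "{0..}" f "{0..}" g] f g by (auto simp: class_K_def)
  moreover have "strict_mono_on {0..} (\<lambda>r. f (g r))"
    by (rule strict_mono_onI) (use class_K_less[OF f] class_K_less[OF g] class_K_nonneg[OF g] in auto)
  ultimately show ?thesis using f g by (simp add: class_K_def)
qed

lemma class_K_add:
  assumes f: "class_K f" and g: "class_K g"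
  shows "class_K (\<lambda>r. f r + g r)"
proof -
  have "continuous_on {0..} (\<lambda>r. f r + g r)"
    using f g by (auto simp: class_K_def intro!: continuous_intros)
  moreover have "strict_mono_on {0..} (\<lambda>r. f r + g r)"
    by (rule strict_mono_onI) (use class_K_less[OF f] class_K_less[OF g] in \<open>auto intro: add_strict_mono\<close>)
  ultimately show ?thesis using f g by (simp add: class_K_def)
qed

lemma class_K_cmult:
  assumes f: "class_K f" and c: "0 < c"
  shows "class_K (\<lambda>r. c * f r)"
proof -
  have "continuous_on {0..} (\<lambda>r. c * f r)"
    using f by (auto simp: class_K_def intro!: continuous_intros)
  moreover have "strict_mono_on {0..} (\<lambda>r. c * f r)"
    by (rule strict_mono_onI) (use class_K_less[OF f] c in auto)
  ultimately show ?thesis using f by (simp add: class_K_def)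
qed

lemma class_Kinf_add:
  assumes f: "class_Kinf f" and g: "class_K g"
  shows "class_Kinf (\<lambda>r. f r + g r)"
proof -
  have "filterlim (\<lambda>r. f r + g r) at_top at_top"
  proof (rule filterlim_at_top_mono)
    show "filterlim f at_top at_top" using f by (simp add: class_Kinf_def)
    show "\<forall>\<^sub>F r in at_top. f r \<le> f r + g r"
      using eventually_ge_at_top[of "0::real"] by eventually_elim (use class_K_nonneg[OF g] in auto)
  qed
  then show ?thesis using class_K_add[OF class_Kinf_imp_class_K[OF f] g] by (simp add: class_Kinf_def)
qed

lemma class_K_add_le:
  assumes f: "class_K f" and "0 \<le> a" "0 \<le> b"
  shows "f (a + b) \<le> f (2 * a) + f (2 * b)"
proof -
  have "f (a + b) \<le> f (2 * max a b)"
    using assms by (intro class_K_mono[OF f]) auto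
  also have "\<dots> \<le> f (2 * a) + f (2 * b)"
    using class_K_nonneg[OF f, of "2 * a"] class_K_nonneg[OF f, of "2 * b"] assms
    by (cases "a \<le> b") (auto simp: max_def)
  finally show ?thesis .
qed

lemma class_K_exists_small:
  assumes f: "class_K f" and "0 < \<epsilon>"
  shows "\<exists>\<delta>>0. f \<delta> \<le> \<epsilon>"
proof -
  have "(f \<longlongrightarrow> 0) (at 0 within {0..})"
    using f unfolding class_K_def continuous_on_def by (metis atLeast_iff order_refl)
  then have "\<forall>\<^sub>F \<delta> in at 0 within {0..}. f \<delta> < \<epsilon>"
    using assms(2) by (rule order_tendstoD)
  then obtain d where "0 < d" and d: "\<And>\<delta>. \<delta> \<in> {0..} \<Longrightarrow> \<delta> \<noteq> 0 \<Longrightarrow> dist \<delta> 0 < d \<Longrightarrow> f \<delta> < \<epsilon>"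
    unfolding eventually_at by blast
  then have "f (d / 2) < \<epsilon>" by (intro d) auto
  then show ?thesis using \<open>0 < d\<close> by (intro exI[of _ "d / 2"]) auto
qed

section \<open>Piecewise linear interpolation\<close>

text \<open>The piecewise linear interpolant of a sequence, written as a telescoping sum of clamped
  ramps so that continuity is immediate.\<close>

definition pl_interp :: "(nat \<Rightarrow> real) \<Rightarrow> real \<Rightarrow> real" where
  "pl_interp a t = a (nat \<lceil>t\<rceil>) + (\<Sum>n<nat \<lceil>t\<rceil>. (a n - a (Suc n)) * max 0 (min 1 (real n + 1 - t)))"

lemma pl_interp_eq_sum:
  assumes "t \<le> real M"
  shows "pl_interp a t = a M + (\<Sum>n<M. (a n - a (Suc n)) * max 0 (min 1 (real n + 1 - t)))"
proof -
  define N where "N = nat \<lceil>t\<rceil>"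
  have "N \<le> M" using assms unfolding N_def by linarith
  have "t \<le> real N" unfolding N_def by linarith
  have "pl_interp a t = a (N + k) + (\<Sum>n<N + k. (a n - a (Suc n)) * max 0 (min 1 (real n + 1 - t)))" for k
  proof (induction k)
    case 0
    then show ?case by (simp add: pl_interp_def N_def)
  next
    case (Suc k)
    have "max 0 (min 1 (real (N + k) + 1 - t)) = 1" using \<open>t \<le> real N\<close> by simp
    then show ?case using Suc by simp
  qed
  from this[of "M - N"] \<open>N \<le> M\<close> show ?thesis by simp
qed

lemma pl_interp_segment:
  assumes "real k \<le> t" "t \<le> real k + 1"
  shows "pl_interp a t = (real k + 1 - t) * a k + (t - real k) * a (Suc k)"
proof -
  have "(\<Sum>n<k. (a n - a (Suc n)) * max 0 (min 1 (real n + 1 - t))) = 0"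
    using assms by (intro sum.neutral) auto
  then show ?thesis
    using pl_interp_eq_sum[of t "Suc k" a] assms by (simp add: algebra_simps)
qed

lemma pl_interp_of_nat: "pl_interp a (real n) = a n"
  using pl_interp_segment[of n "real n" a] by simp

lemma continuous_on_pl_interp: "continuous_on UNIV (pl_interp a)"
proof (rule continuous_at_imp_continuous_on, safe)
  fix t0 :: real
  define M where "M = Suc (nat \<lceil>t0\<rceil>)"
  have "continuous_on {..<real M} (\<lambda>t. a M + (\<Sum>n<M. (a n - a (Suc n)) * max 0 (min 1 (real n + 1 - t))))"
    by (intro continuous_intros)
  then have "continuous_on {..<real M} (pl_interp a)"
    by (rule continuous_on_cong[THEN iffD1, rotated 2]) (auto intro!: pl_interp_eq_sum[symmetric])
  moreover have "t0 < real M" unfolding M_def by linarith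
  ultimately show "isCont (pl_interp a) t0"
    by (simp add: continuous_on_eq_continuous_at)
qed

lemma pl_interp_le_pl_interp:
  assumes "\<And>n. a n \<le> b n" "0 \<le> t"
  shows "pl_interp a t \<le> pl_interp b t"
proof -
  define k where "k = nat \<lfloor>t\<rfloor>"
  have k: "real k \<le> t" "t \<le> real k + 1" unfolding k_def using assms(2) by linarith+
  show ?thesis
    unfolding pl_interp_segment[OF k, of a] pl_interp_segment[OF k, of b]
    using k by (intro add_mono mult_left_mono assms(1)) auto
qed

lemma pl_interp_mono:
  assumes "incseq a" "s \<le> t"
  shows "pl_interp a s \<le> pl_interp a t"
proof -
  define M where "M = nat \<lceil>t\<rceil>"
  have M: "t \<le> real M" "s \<le> real M" unfolding M_def using assms(2) by linarith+
  show ?thesis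
    unfolding pl_interp_eq_sum[OF M(1)] pl_interp_eq_sum[OF M(2)]
    using assms by (intro add_left_mono sum_mono mult_left_mono_neg max.mono min.mono)
      (auto simp: incseq_Suc_iff)
qed

lemma pl_interp_antimono:
  assumes "decseq a" "s \<le> t"
  shows "pl_interp a t \<le> pl_interp a s"
proof -
  define M where "M = nat \<lceil>t\<rceil>"
  have M: "t \<le> real M" "s \<le> real M" unfolding M_def using assms(2) by linarith+
  show ?thesis
    unfolding pl_interp_eq_sum[OF M(1)] pl_interp_eq_sum[OF M(2)]
    using assms by (intro add_left_mono sum_mono mult_left_mono max.mono min.mono)
      (auto simp: decseq_Suc_iff)
qed

locale decaying_grid =
  fixes W :: "nat \<Rightarrow> nat \<Rightarrow> real"
  assumes nonneg: "\<And>m n. 0 \<le> W m n"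
    and mono_radius: "\<And>n. incseq (\<lambda>m. W m n)"
    and antimono_time: "\<And>m. decseq (W m)"
    and decay: "\<And>m. W m \<longlonglongrightarrow> 0"
begin

text \<open>The radius index is shifted by one so that \<open>interp r t\<close> dominates the grid value
  above \<open>(r, t)\<close>.\<close>

definition interp :: "real \<Rightarrow> real \<Rightarrow> real" where
  "interp r t = pl_interp (\<lambda>m. pl_interp (W (Suc m)) t) r"

lemma pl_interp_row_antimono: "s \<le> t \<Longrightarrow> pl_interp (W m) t \<le> pl_interp (W m) s"
  using antimono_time by (rule pl_interp_antimono)

lemma pl_interp_rows_incseq: "0 \<le> t \<Longrightarrow> incseq (\<lambda>m. pl_interp (W m) t)"
  using mono_radius by (auto simp: incseq_def intro!: pl_interp_le_pl_interp)

lemma interp_nonneg: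
  assumes "0 \<le> r" "0 \<le> t"
  shows "0 \<le> interp r t"
proof -
  have "pl_interp (\<lambda>_. 0) t \<le> pl_interp (W m) t" for m
    using nonneg assms(2) by (intro pl_interp_le_pl_interp)
  then have "pl_interp (\<lambda>_. 0) r \<le> interp r t"
    unfolding interp_def using pl_interp_of_nat assms(1) by (intro pl_interp_le_pl_interp) (auto simp: pl_interp_def)
  then show ?thesis by (simp add: pl_interp_def)
qed

lemma interp_mono: "0 \<le> t \<Longrightarrow> r \<le> r' \<Longrightarrow> interp r t \<le> interp r' t"
  unfolding interp_def using pl_interp_rows_incseq
  by (intro pl_interp_mono) (auto simp: incseq_def)

lemma interp_antimono: "0 \<le> r \<Longrightarrow> s \<le> t \<Longrightarrow> interp r t \<le> interp r s"
  unfolding interp_def using pl_interp_row_antimono by (intro pl_interp_le_pl_interp)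

lemma continuous_on_interp_radius: "continuous_on UNIV (\<lambda>r. interp r t)"
  unfolding interp_def using continuous_on_pl_interp by (simp add: fun_eq_iff)

lemma continuous_on_interp_time: "continuous_on UNIV (\<lambda>t. interp r t)"
  unfolding interp_def pl_interp_def[of _ r]
  by (intro continuous_intros continuous_on_compose2[OF continuous_on_pl_interp]) auto

lemma interp_lower_bound:
  assumes "0 \<le> r" "0 \<le> t"
  shows "W (Suc (nat \<lfloor>r\<rfloor>)) (Suc (nat \<lfloor>t\<rfloor>)) \<le> interp r t"
proof -
  let ?k = "nat \<lfloor>r\<rfloor>"
  have "W (Suc ?k) (Suc (nat \<lfloor>t\<rfloor>)) = pl_interp (W (Suc ?k)) (real (Suc (nat \<lfloor>t\<rfloor>)))"
    by (simp only: pl_interp_of_nat)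
  also have "\<dots> \<le> pl_interp (W (Suc ?k)) t"
    by (intro pl_interp_row_antimono) linarith
  also have "\<dots> = pl_interp (\<lambda>m. pl_interp (W (Suc m)) t) (real ?k)"
    by (simp only: pl_interp_of_nat)
  also have "\<dots> \<le> interp r t"
    unfolding interp_def using pl_interp_rows_incseq[OF assms(2)] assms(1)
    by (intro pl_interp_mono) (auto simp: incseq_def)
  finally show ?thesis .
qed

lemma interp_tendsto_zero:
  assumes "0 \<le> r"
  shows "((\<lambda>t. interp r t) \<longlongrightarrow> 0) at_top"
proof (rule tendsto_sandwich)
  let ?k = "Suc (nat \<lceil>r\<rceil>)"
  show "\<forall>\<^sub>F t in at_top. 0 \<le> interp r t"
    using eventually_ge_at_top[of 0] by eventually_elim (use interp_nonneg assms in auto)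
  show "\<forall>\<^sub>F t in at_top. interp r t \<le> W ?k (nat \<lfloor>t\<rfloor>)"
    using eventually_ge_at_top[of 0]
  proof eventually_elim
    case (elim t)
    have "interp r t \<le> interp (real (nat \<lceil>r\<rceil>)) t"
      using elim by (intro interp_mono) linarith+
    also have "\<dots> = pl_interp (W ?k) t"
      by (simp only: interp_def pl_interp_of_nat)
    also have "\<dots> \<le> pl_interp (W ?k) (real (nat \<lfloor>t\<rfloor>))"
      using elim by (intro pl_interp_row_antimono) linarith
    finally show ?case by (simp only: pl_interp_of_nat)
  qed
  show "((\<lambda>t. W ?k (nat \<lfloor>t\<rfloor>)) \<longlongrightarrow> 0) at_top"
    by (rule filterlim_compose[OF decay
          filterlim_compose[OF filterlim_nat_sequentially filterlim_floor_sequentially]])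
qed (simp)

end

section \<open>\<open>\<K>\<L>\<close> bounds from uniform decay\<close>

lemma class_K_min_plus_linear:
  assumes \<sigma>: "class_K \<sigma>" and "0 < c"
    and g: "0 \<le> g 0" "\<And>r r'. 0 \<le> r \<Longrightarrow> r \<le> r' \<Longrightarrow> g r \<le> g r'" "continuous_on {0..} g"
  shows "class_K (\<lambda>r. min (\<sigma> r) (g r) + r * c)"
  unfolding class_K_def
proof safe
  show "continuous_on {0..} (\<lambda>r. min (\<sigma> r) (g r) + r * c)"
    using \<sigma> g(3) by (auto simp: class_K_def intro!: continuous_intros)
  show "min (\<sigma> 0) (g 0) + 0 * c = 0"
    using \<sigma> g(1) by (simp add: class_K_def)
  show "strict_mono_on {0..} (\<lambda>r. min (\<sigma> r) (g r) + r * c)"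
  proof (rule strict_mono_onI)
    fix r r' :: real assume "r \<in> {0..}" "r' \<in> {0..}" "r < r'"
    then have "min (\<sigma> r) (g r) \<le> min (\<sigma> r') (g r')" "r * c < r' * c"
      using class_K_mono[OF \<sigma>, of r r'] g(2)[of r r'] \<open>0 < c\<close> by auto
    then show "min (\<sigma> r) (g r) + r * c < min (\<sigma> r') (g r') + r' * c" by linarith
  qed
qed

lemma class_L_min_plus_exp:
  assumes "0 \<le> a" "0 < c"
    and g: "\<And>s t. 0 \<le> s \<Longrightarrow> s \<le> t \<Longrightarrow> g t \<le> g s" "continuous_on {0..} g" "(g \<longlongrightarrow> 0) at_top"
  shows "class_L (\<lambda>t. min a (g t) + c * exp (- t))"
  unfolding class_L_def
proof safe
  show "continuous_on {0..} (\<lambda>t. min a (g t) + c * exp (- t))"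
    using g(2) by (auto intro!: continuous_intros)
  show "strict_antimono_on {0..} (\<lambda>t. min a (g t) + c * exp (- t))"
    unfolding monotone_on_def
  proof (intro ballI impI)
    fix s t :: real assume "s \<in> {0..}" "t \<in> {0..}" "s < t"
    then have "min a (g t) \<le> min a (g s)" "c * exp (- t) < c * exp (- s)"
      using g(1)[of s t] \<open>0 < c\<close> by auto
    then show "min a (g t) + c * exp (- t) < min a (g s) + c * exp (- s)" by linarith
  qed
  have "((\<lambda>t::real. exp (- t)) \<longlongrightarrow> 0) at_top"
    by (rule filterlim_compose[OF exp_at_bot filterlim_uminus_at_bot_at_top])
  then have "((\<lambda>t. min a (g t) + c * exp (- t)) \<longlongrightarrow> min a 0 + c * 0) at_top"
    by (intro tendsto_intros g(3))
  then show "((\<lambda>t. min a (g t) + c * exp (- t)) \<longlongrightarrow> 0) at_top"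
    using \<open>0 \<le> a\<close> by simp
qed

text \<open>The minimum with \<open>\<sigma>\<close> forces \<open>\<beta> 0 t = 0\<close>; the summand \<open>r e\<^sup>-\<^sup>t\<close> makes \<open>\<beta>\<close> strictly
  monotone in both arguments.\<close>

lemma class_KL_min_plus_exp:
  fixes G :: "real \<Rightarrow> real \<Rightarrow> real"
  assumes \<sigma>: "class_K \<sigma>"
    and nonneg: "\<And>r t. 0 \<le> r \<Longrightarrow> 0 \<le> t \<Longrightarrow> 0 \<le> G r t"
    and mono: "\<And>r r' t. 0 \<le> t \<Longrightarrow> 0 \<le> r \<Longrightarrow> r \<le> r' \<Longrightarrow> G r t \<le> G r' t"
    and antimono: "\<And>r s t. 0 \<le> r \<Longrightarrow> 0 \<le> s \<Longrightarrow> s \<le> t \<Longrightarrow> G r t \<le> G r s"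
    and cont_radius: "\<And>t. 0 \<le> t \<Longrightarrow> continuous_on {0..} (\<lambda>r. G r t)"
    and cont_time: "\<And>r. 0 < r \<Longrightarrow> continuous_on {0..} (\<lambda>t. G r t)"
    and lim: "\<And>r. 0 < r \<Longrightarrow> ((\<lambda>t. G r t) \<longlongrightarrow> 0) at_top"
  shows "class_KL (\<lambda>r t. min (\<sigma> r) (G r t) + r * exp (- t))"
  unfolding class_KL_def
proof safe
  fix t :: real assume "0 \<le> t"
  then show "class_K (\<lambda>r. min (\<sigma> r) (G r t) + r * exp (- t))"
    using nonneg mono cont_radius by (intro class_K_min_plus_linear[OF \<sigma>]) auto
next
  fix r :: real assume "0 < r"
  then show "class_L (\<lambda>t. min (\<sigma> r) (G r t) + r * exp (- t))"
    using antimono cont_time lim class_K_nonneg[OF \<sigma>]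
    by (intro class_L_min_plus_exp) auto
qed

locale uniformly_decaying =
  fixes S :: "'a set" and v nx tm :: "'a \<Rightarrow> real" and \<sigma> :: "real \<Rightarrow> real"
  assumes class_K_bound: "class_K \<sigma>"
    and nonneg: "\<And>p. p \<in> S \<Longrightarrow> 0 \<le> nx p \<and> 0 \<le> tm p"
    and bounded: "\<And>p. p \<in> S \<Longrightarrow> v p \<le> \<sigma> (nx p)"
    and uniform_decay: "\<And>\<epsilon> R. 0 < \<epsilon> \<Longrightarrow> \<exists>\<tau>. \<forall>p\<in>S. nx p \<le> R \<longrightarrow> \<tau> \<le> tm p \<longrightarrow> v p \<le> \<epsilon>"
begin

text \<open>The time window of cell \<open>(m, n)\<close> starts at \<open>n - 1\<close>, so that every \<open>p \<in> S\<close> lies in the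
  cell \<open>(\<lfloor>nx p\<rfloor> + 1, \<lfloor>tm p\<rfloor> + 1)\<close>.\<close>

definition cell :: "nat \<Rightarrow> nat \<Rightarrow> real set" where
  "cell m n = insert 0 (v ` {p \<in> S. nx p \<le> real m \<and> real n \<le> tm p + 1})"

definition cell_sup :: "nat \<Rightarrow> nat \<Rightarrow> real" where
  "cell_sup m n = Sup (cell m n)"

lemma bdd_above_cell: "bdd_above (cell m n)"
proof (rule bdd_aboveI)
  fix y assume "y \<in> cell m n"
  then show "y \<le> \<sigma> (real m)"
    unfolding cell_def using class_K_nonneg[OF class_K_bound, of "real m"]
    by (auto intro: order_trans[OF bounded class_K_mono[OF class_K_bound]] dest: nonneg)
qed

lemma cell_sup_nonneg: "0 \<le> cell_sup m n"
  unfolding cell_sup_def by (rule cSup_upper[OF _ bdd_above_cell]) (simp add: cell_def)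

lemma le_cell_sup: "p \<in> S \<Longrightarrow> nx p \<le> real m \<Longrightarrow> real n \<le> tm p + 1 \<Longrightarrow> v p \<le> cell_sup m n"
  unfolding cell_sup_def by (rule cSup_upper[OF _ bdd_above_cell]) (auto simp: cell_def)

lemma cell_sup_le:
  assumes "0 \<le> \<epsilon>" "\<And>p. p \<in> S \<Longrightarrow> nx p \<le> real m \<Longrightarrow> real n \<le> tm p + 1 \<Longrightarrow> v p \<le> \<epsilon>"
  shows "cell_sup m n \<le> \<epsilon>"
  unfolding cell_sup_def by (rule cSup_least) (use assms in \<open>auto simp: cell_def\<close>)

lemma cell_sup_tendsto_zero: "cell_sup m \<longlonglongrightarrow> 0"
proof (rule order_tendstoI)
  fix a :: real assume "a < 0"
  then show "\<forall>\<^sub>F n in sequentially. a < cell_sup m n"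
    using cell_sup_nonneg by (intro always_eventually allI) (rule less_le_trans)
next
  fix a :: real assume "0 < a"
  then obtain \<tau> where \<tau>: "\<forall>p\<in>S. nx p \<le> real m \<longrightarrow> \<tau> \<le> tm p \<longrightarrow> v p \<le> a / 2"
    using uniform_decay[of "a / 2" "real m"] by auto
  have "cell_sup m n \<le> a / 2" if n: "nat \<lceil>\<tau>\<rceil> + 1 \<le> n" for n
  proof (rule cell_sup_le)
    show "0 \<le> a / 2" using \<open>0 < a\<close> by simp
    fix p assume "p \<in> S" "nx p \<le> real m" "real n \<le> tm p + 1"
    moreover from n \<open>real n \<le> tm p + 1\<close> have "\<tau> \<le> tm p" by linarith
    ultimately show "v p \<le> a / 2" using \<tau> by blast
  qed
  then show "\<forall>\<^sub>F n in sequentially. cell_sup m n < a"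
    using \<open>0 < a\<close> unfolding eventually_sequentially by (intro exI[of _ "nat \<lceil>\<tau>\<rceil> + 1"]) force
qed

lemma decaying_grid_cell_sup: "decaying_grid cell_sup"
proof
  show "incseq (\<lambda>m. cell_sup m n)" for n
    unfolding cell_sup_def incseq_def
    by (intro allI impI cSup_subset_mono bdd_above_cell) (auto simp: cell_def)
  show "decseq (cell_sup m)" for m
    unfolding cell_sup_def decseq_def
    by (intro allI impI cSup_subset_mono bdd_above_cell) (auto simp: cell_def)
qed (use cell_sup_nonneg cell_sup_tendsto_zero in auto)

lemma KL_bound: "\<exists>\<beta>. class_KL \<beta> \<and> (\<forall>p\<in>S. v p \<le> \<beta> (nx p) (tm p))"
proof -
  interpret grid: decaying_grid cell_sup by (rule decaying_grid_cell_sup)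
  define \<beta> where "\<beta> r t = min (\<sigma> r) (grid.interp r t) + r * exp (- t)" for r t
  have "class_KL \<beta>"
    unfolding \<beta>_def
    using grid.interp_nonneg grid.interp_mono grid.interp_antimono grid.interp_tendsto_zero
      continuous_on_subset[OF grid.continuous_on_interp_radius]
      continuous_on_subset[OF grid.continuous_on_interp_time]
    by (intro class_KL_min_plus_exp[OF class_K_bound]) auto
  moreover have "v p \<le> \<beta> (nx p) (tm p)" if p: "p \<in> S" for p
  proof -
    have r: "0 \<le> nx p" and t: "0 \<le> tm p" using nonneg[OF p] by auto
    have "v p \<le> cell_sup (Suc (nat \<lfloor>nx p\<rfloor>)) (Suc (nat \<lfloor>tm p\<rfloor>))"
      using r t by (intro le_cell_sup[OF p]) linarith+
    also have "\<dots> \<le> grid.interp (nx p) (tm p)" by (rule grid.interp_lower_bound[OF r t])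
    finally have "v p \<le> min (\<sigma> (nx p)) (grid.interp (nx p) (tm p))" using bounded[OF p] by simp
    then show ?thesis unfolding \<beta>_def using r by (simp add: add_increasing2)
  qed
  ultimately show ?thesis by blast
qed

end

section \<open>Forward complete systems with outputs\<close>

context
  fixes T :: "real set"
    and Uset :: "(real \<Rightarrow> 'u::real_vector) set"
    and nU :: "(real \<Rightarrow> 'u) \<Rightarrow> real"
    and \<phi> :: "real \<Rightarrow> 'x::real_normed_vector \<Rightarrow> (real \<Rightarrow> 'u) \<Rightarrow> 'x"
    and h :: "'x \<Rightarrow> 'u \<Rightarrow> 'y::real_normed_vector"
  assumes fc: "fc_control_system T Uset nU \<phi>"
begin

lemma fc_time_set_cases: "T = \<nat> \<or> T = {0..}"
  using fc unfolding fc_control_system_def by blast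

lemma fc_zero_in_time_set: "0 \<in> T"
  using fc_time_set_cases by auto

lemma fc_of_nat_in_time_set: "real n \<in> T"
  using fc_time_set_cases by auto

lemma fc_time_nonneg: "t \<in> T \<Longrightarrow> 0 \<le> t"
  using fc_time_set_cases by (auto elim: Nats_cases)

lemma fc_time_diff:
  assumes "t \<in> T" "s \<in> T" "s \<le> t"
  shows "t - s \<in> T"
  using fc_time_set_cases
proof
  assume T: "T = \<nat>"
  with assms obtain a b where ab: "t = real a" "s = real b" by (auto elim!: Nats_cases)
  with assms have "t - s = real (a - b)" by (simp add: of_nat_diff)
  then show ?thesis using T by simp
next
  assume "T = {0..}"
  with assms show ?thesis by simp
qed

lemma fc_input_norm_nonneg: "u \<in> Uset \<Longrightarrow> 0 \<le> nU u"
  using fc by (simp add: fc_control_system_def)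

lemma fc_shift_inp_in_inputs: "u \<in> Uset \<Longrightarrow> \<tau> \<in> T \<Longrightarrow> shift_inp T \<tau> u \<in> Uset"
  using fc unfolding fc_control_system_def by blast

lemma fc_shift_inp_norm_le: "u \<in> Uset \<Longrightarrow> \<tau> \<in> T \<Longrightarrow> nU (shift_inp T \<tau> u) \<le> nU u"
  using fc unfolding fc_control_system_def by blast

lemma outp_zero: "u \<in> Uset \<Longrightarrow> outp \<phi> h 0 x u = h x (u 0)"
  using fc by (simp add: fc_control_system_def outp_def)

lemma outp_cocycle:
  assumes "t0 \<in> T" "t \<in> T" "u \<in> Uset"
  shows "outp \<phi> h (t0 + t) x u = outp \<phi> h t (\<phi> t0 x u) (shift_inp T t0 u)"
proof -
  have "\<phi> (t0 + t) x u = \<phi> t (\<phi> t0 x u) (shift_inp T t0 u)"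
    using fc assms unfolding fc_control_system_def by blast
  moreover have "shift_inp T t0 u t = u (t0 + t)"
    using assms(2) by (simp add: shift_inp_def add.commute)
  ultimately show ?thesis by (simp add: outp_def)
qed

lemma OL_restart:
  assumes "OL T Uset nU \<phi> h"
  obtains \<sigma> \<gamma> where "class_Kinf \<sigma>" "class_Kinf \<gamma>"
    "\<And>x u t0 t. u \<in> Uset \<Longrightarrow> t0 \<in> T \<Longrightarrow> t \<in> T \<Longrightarrow> t0 \<le> t \<Longrightarrow>
      norm (outp \<phi> h t x u) \<le> \<sigma> (norm (outp \<phi> h t0 x u)) + \<gamma> (nU u)"
proof -
  obtain \<sigma> \<gamma> where \<sigma>: "class_Kinf \<sigma>" and \<gamma>: "class_Kinf \<gamma>"
    and OL: "\<forall>x. \<forall>u\<in>Uset. \<forall>t\<in>T. norm (outp \<phi> h t x u) \<le> \<sigma> (norm (outp \<phi> h 0 x u)) + \<gamma> (nU u)"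
    using assms unfolding OL_def by blast
  show ?thesis
  proof (rule that[OF \<sigma> \<gamma>])
    fix x u t0 t assume u: "u \<in> Uset" and t0: "t0 \<in> T" and t: "t \<in> T" "t0 \<le> t"
    let ?w = "shift_inp T t0 u"
    have w: "?w \<in> Uset" "nU ?w \<le> nU u"
      using fc_shift_inp_in_inputs[OF u t0] fc_shift_inp_norm_le[OF u t0] by auto
    have t': "t - t0 \<in> T" using fc_time_diff t t0 by simp
    have "outp \<phi> h t x u = outp \<phi> h (t - t0) (\<phi> t0 x u) ?w"
      using outp_cocycle[OF t0 t' u] by simp
    also have "norm \<dots> \<le> \<sigma> (norm (outp \<phi> h 0 (\<phi> t0 x u) ?w)) + \<gamma> (nU ?w)"
      using OL w(1) t' by blast
    also have "outp \<phi> h 0 (\<phi> t0 x u) ?w = outp \<phi> h t0 x u"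
      using outp_cocycle[OF t0 fc_zero_in_time_set u] by simp
    also have "\<gamma> (nU ?w) \<le> \<gamma> (nU u)"
      using class_K_mono[OF class_Kinf_imp_class_K[OF \<gamma>]] fc_input_norm_nonneg w by blast
    finally show "norm (outp \<phi> h t x u) \<le> \<sigma> (norm (outp \<phi> h t0 x u)) + \<gamma> (nU u)"
      by simp
  qed
qed

lemma OL_K_bounded_imp_output_bound:
  assumes "OL T Uset nU \<phi> h" "K_bounded Uset nU h"
  obtains \<rho> \<kappa> where "class_K \<rho>" "class_Kinf \<kappa>"
    "\<And>x u t. u \<in> Uset \<Longrightarrow> t \<in> T \<Longrightarrow> norm (outp \<phi> h t x u) \<le> \<rho> (norm x) + \<kappa> (nU u)"
proof -
  obtain \<sigma> \<gamma> where \<sigma>: "class_Kinf \<sigma>" and \<gamma>: "class_Kinf \<gamma>"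
    and OL: "\<forall>x. \<forall>u\<in>Uset. \<forall>t\<in>T. norm (outp \<phi> h t x u) \<le> \<sigma> (norm (outp \<phi> h 0 x u)) + \<gamma> (nU u)"
    using assms(1) unfolding OL_def by blast
  obtain \<sigma>1 \<gamma>1 where \<sigma>1: "class_K \<sigma>1" and \<gamma>1: "class_K \<gamma>1"
    and Kb: "\<forall>x. \<forall>u\<in>Uset. norm (h x (u 0)) \<le> \<sigma>1 (norm x) + \<gamma>1 (nU u)"
    using assms(2) unfolding K_bounded_def by blast
  have \<sigma>K: "class_K \<sigma>" using \<sigma> by (rule class_Kinf_imp_class_K)
  show ?thesis
  proof
    show "class_K (\<lambda>r. \<sigma> (2 * \<sigma>1 r))"
      by (intro class_K_compose[OF \<sigma>K] class_K_cmult[OF \<sigma>1]) simp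
    show "class_Kinf (\<lambda>s. \<gamma> s + \<sigma> (2 * \<gamma>1 s))"
      by (intro class_Kinf_add[OF \<gamma>] class_K_compose[OF \<sigma>K] class_K_cmult[OF \<gamma>1]) simp
    fix x u t assume u: "u \<in> Uset" and t: "t \<in> T"
    have "norm (outp \<phi> h t x u) \<le> \<sigma> (norm (outp \<phi> h 0 x u)) + \<gamma> (nU u)"
      using OL u t by blast
    also have "\<sigma> (norm (outp \<phi> h 0 x u)) \<le> \<sigma> (\<sigma>1 (norm x) + \<gamma>1 (nU u))"
      using Kb u by (intro class_K_mono[OF \<sigma>K]) (auto simp: outp_zero)
    also have "\<dots> \<le> \<sigma> (2 * \<sigma>1 (norm x)) + \<sigma> (2 * \<gamma>1 (nU u))"
      using class_K_nonneg[OF \<sigma>1] class_K_nonneg[OF \<gamma>1] fc_input_norm_nonneg[OF u]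
      by (intro class_K_add_le[OF \<sigma>K]) auto
    finally show "norm (outp \<phi> h t x u) \<le> \<sigma> (2 * \<sigma>1 (norm x)) + (\<gamma> (nU u) + \<sigma> (2 * \<gamma>1 (nU u)))"
      by simp
  qed
qed

lemma IOS_imp_OUAG:
  assumes "IOS T Uset nU \<phi> h"
  shows "OUAG T Uset nU \<phi> h"
proof -
  obtain \<beta> \<gamma> where \<beta>: "class_KL \<beta>" and \<gamma>: "class_Kinf \<gamma>"
    and IOS: "\<forall>x. \<forall>u\<in>Uset. \<forall>t\<in>T. norm (outp \<phi> h t x u) \<le> \<beta> (norm x) t + \<gamma> (nU u)"
    using assms unfolding IOS_def by blast
  have "\<exists>\<tau>\<in>T. \<forall>x. \<forall>u\<in>Uset. \<forall>t\<in>T. norm x < r \<longrightarrow> nU u < s \<longrightarrow> \<tau> \<le> t \<longrightarrow>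
      norm (outp \<phi> h t x u) \<le> \<epsilon> + \<gamma> (nU u)" if "0 < \<epsilon>" "0 < r" for \<epsilon> r s
  proof -
    have "((\<lambda>t. \<beta> r t) \<longlongrightarrow> 0) at_top" using \<beta> \<open>0 < r\<close> by (simp add: class_KL_def class_L_def)
    then have "\<forall>\<^sub>F t in at_top. \<beta> r t < \<epsilon>" using \<open>0 < \<epsilon>\<close> by (rule order_tendstoD)
    then obtain N where N: "\<And>t. N \<le> t \<Longrightarrow> \<beta> r t < \<epsilon>" unfolding eventually_at_top_linorder by blast
    have "norm (outp \<phi> h t x u) \<le> \<epsilon> + \<gamma> (nU u)"
      if "u \<in> Uset" "t \<in> T" "norm x < r" "real (nat \<lceil>N\<rceil>) \<le> t" for x u t
    proof -
      have "class_K (\<lambda>r. \<beta> r t)" using \<beta> fc_time_nonneg[OF that(2)] by (simp add: class_KL_def)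
      then have "\<beta> (norm x) t \<le> \<beta> r t" using class_K_mono[of "\<lambda>r. \<beta> r t" "norm x" r] that(3) by simp
      moreover have "\<beta> r t < \<epsilon>" using that(4) by (intro N) linarith
      moreover have "norm (outp \<phi> h t x u) \<le> \<beta> (norm x) t + \<gamma> (nU u)" using IOS that(1,2) by blast
      ultimately show ?thesis by linarith
    qed
    then show ?thesis using fc_of_nat_in_time_set by blast
  qed
  then show ?thesis unfolding OUAG_def using \<gamma> by blast
qed

lemma IOS_imp_K_bounded:
  assumes "IOS T Uset nU \<phi> h"
  shows "K_bounded Uset nU h"
proof -
  obtain \<beta> \<gamma> where \<beta>: "class_KL \<beta>" and \<gamma>: "class_Kinf \<gamma>"
    and IOS: "\<forall>x. \<forall>u\<in>Uset. \<forall>t\<in>T. norm (outp \<phi> h t x u) \<le> \<beta> (norm x) t + \<gamma> (nU u)"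
    using assms unfolding IOS_def by blast
  have "norm (h x (u 0)) \<le> \<beta> (norm x) 0 + \<gamma> (nU u)" if "u \<in> Uset" for x u
    using IOS fc_zero_in_time_set that by (auto simp: outp_zero[OF that, symmetric])
  moreover have "class_K (\<lambda>r. \<beta> r 0)" using \<beta> by (simp add: class_KL_def)
  ultimately show ?thesis
    unfolding K_bounded_def using class_Kinf_imp_class_K[OF \<gamma>] by blast
qed

lemma OUAG_imp_OULIM:
  assumes "OUAG T Uset nU \<phi> h"
  shows "OULIM T Uset nU \<phi> h"
proof -
  obtain \<gamma> where "class_Kinf \<gamma>" and OUAG: "\<forall>\<epsilon>>0. \<forall>r>0. \<forall>s>0. \<exists>\<tau>\<in>T. \<forall>x. \<forall>u\<in>Uset. \<forall>t\<in>T.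
      norm x < r \<longrightarrow> nU u < s \<longrightarrow> \<tau> \<le> t \<longrightarrow> norm (outp \<phi> h t x u) \<le> \<epsilon> + \<gamma> (nU u)"
    using assms unfolding OUAG_def by blast
  have "\<exists>\<tau>\<in>T. \<forall>x. \<forall>u\<in>Uset. norm x < r \<longrightarrow> nU u < s \<longrightarrow>
      (\<exists>t\<in>T. t \<le> \<tau> \<and> norm (outp \<phi> h t x u) \<le> \<epsilon> + \<gamma> (nU u))" if pos: "0 < \<epsilon>" "0 < r" "0 < s" for \<epsilon> r s
  proof -
    obtain \<tau> where "\<tau> \<in> T" and "\<forall>x. \<forall>u\<in>Uset. \<forall>t\<in>T.
        norm x < r \<longrightarrow> nU u < s \<longrightarrow> \<tau> \<le> t \<longrightarrow> norm (outp \<phi> h t x u) \<le> \<epsilon> + \<gamma> (nU u)"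
      using OUAG[rule_format, OF pos] by blast
    then show ?thesis by (intro bexI[of _ \<tau>]) auto
  qed
  with \<open>class_Kinf \<gamma>\<close> show ?thesis unfolding OULIM_def by blast
qed

lemma OL_after_small_output:
  assumes \<sigma>: "class_K \<sigma>" and "0 \<le> \<delta>" "0 \<le> g"
    and OL: "norm (outp \<phi> h t x u) \<le> \<sigma> (norm (outp \<phi> h t0 x u)) + \<gamma> (nU u)"
    and small: "norm (outp \<phi> h t0 x u) \<le> \<delta> + g"
  shows "norm (outp \<phi> h t x u) \<le> \<sigma> (2 * \<delta>) + (\<gamma> (nU u) + \<sigma> (2 * g))"
proof -
  have "\<sigma> (norm (outp \<phi> h t0 x u)) \<le> \<sigma> (\<delta> + g)"
    using small by (intro class_K_mono[OF \<sigma>]) auto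
  also have "\<dots> \<le> \<sigma> (2 * \<delta>) + \<sigma> (2 * g)"
    using assms(2,3) by (rule class_K_add_le[OF \<sigma>])
  finally show ?thesis using OL by simp
qed

lemma OULIM_OL_imp_OUAG:
  assumes "OULIM T Uset nU \<phi> h" "OL T Uset nU \<phi> h"
  shows "OUAG T Uset nU \<phi> h"
proof -
  obtain \<gamma>L where \<gamma>L: "class_Kinf \<gamma>L" and OULIM: "\<forall>\<epsilon>>0. \<forall>r>0. \<forall>s>0. \<exists>\<tau>\<in>T. \<forall>x. \<forall>u\<in>Uset.
      norm x < r \<longrightarrow> nU u < s \<longrightarrow> (\<exists>t\<in>T. t \<le> \<tau> \<and> norm (outp \<phi> h t x u) \<le> \<epsilon> + \<gamma>L (nU u))"
    using assms(1) unfolding OULIM_def by blast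
  obtain \<sigma> \<gamma> where \<sigma>: "class_Kinf \<sigma>" and \<gamma>: "class_Kinf \<gamma>"
    and OL: "\<And>x u t0 t. u \<in> Uset \<Longrightarrow> t0 \<in> T \<Longrightarrow> t \<in> T \<Longrightarrow> t0 \<le> t \<Longrightarrow>
      norm (outp \<phi> h t x u) \<le> \<sigma> (norm (outp \<phi> h t0 x u)) + \<gamma> (nU u)"
    using OL_restart[OF assms(2)] by blast
  have \<sigma>K: "class_K \<sigma>" using \<sigma> by (rule class_Kinf_imp_class_K)
  define \<Gamma> where "\<Gamma> s = \<gamma> s + \<sigma> (2 * \<gamma>L s)" for s
  have "\<exists>\<tau>\<in>T. \<forall>x. \<forall>u\<in>Uset. \<forall>t\<in>T. norm x < r \<longrightarrow> nU u < s \<longrightarrow> \<tau> \<le> t \<longrightarrow>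
      norm (outp \<phi> h t x u) \<le> \<epsilon> + \<Gamma> (nU u)" if pos: "0 < \<epsilon>" "0 < r" "0 < s" for \<epsilon> r s
  proof -
    obtain \<delta>' where "0 < \<delta>'" "\<sigma> \<delta>' \<le> \<epsilon>"
      using class_K_exists_small[OF \<sigma>K pos(1)] by blast
    define \<delta> where "\<delta> = \<delta>' / 2"
    have "0 < \<delta>" "\<sigma> (2 * \<delta>) \<le> \<epsilon>"
      using \<open>0 < \<delta>'\<close> \<open>\<sigma> \<delta>' \<le> \<epsilon>\<close> by (simp_all add: \<delta>_def)
    then obtain \<tau> where "\<tau> \<in> T" and \<tau>: "\<forall>x. \<forall>u\<in>Uset. norm x < r \<longrightarrow> nU u < s \<longrightarrow>
        (\<exists>t\<in>T. t \<le> \<tau> \<and> norm (outp \<phi> h t x u) \<le> \<delta> + \<gamma>L (nU u))"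
      using OULIM[rule_format, OF \<open>0 < \<delta>\<close> pos(2,3)] by blast
    have "norm (outp \<phi> h t x u) \<le> \<epsilon> + \<Gamma> (nU u)"
      if u: "u \<in> Uset" and t: "t \<in> T" "\<tau> \<le> t" and small: "norm x < r" "nU u < s" for x u t
    proof -
      obtain t0 where t0: "t0 \<in> T" "t0 \<le> \<tau>" and y0: "norm (outp \<phi> h t0 x u) \<le> \<delta> + \<gamma>L (nU u)"
        using \<tau> u small by blast
      have "norm (outp \<phi> h t x u) \<le> \<sigma> (norm (outp \<phi> h t0 x u)) + \<gamma> (nU u)"
        using t0 t by (intro OL[OF u]) auto
      then have "norm (outp \<phi> h t x u) \<le> \<sigma> (2 * \<delta>) + \<Gamma> (nU u)"
        unfolding \<Gamma>_def using \<open>0 < \<delta>\<close>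
          class_K_nonneg[OF class_Kinf_imp_class_K[OF \<gamma>L] fc_input_norm_nonneg[OF u]]
        by (intro OL_after_small_output[OF \<sigma>K _ _ _ y0]) auto
      then show ?thesis using \<open>\<sigma> (2 * \<delta>) \<le> \<epsilon>\<close> by simp
    qed
    then show ?thesis using \<open>\<tau> \<in> T\<close> by blast
  qed
  moreover have "class_Kinf \<Gamma>" unfolding \<Gamma>_def
    by (intro class_Kinf_add[OF \<gamma>] class_K_compose[OF \<sigma>K] class_K_cmult[OF class_Kinf_imp_class_K[OF \<gamma>L]]) simp
  ultimately show ?thesis unfolding OUAG_def by blast
qed

lemma OUAG_output_bound_imp_uniform_decay:
  assumes "OUAG T Uset nU \<phi> h" and \<rho>: "class_K \<rho>" and \<kappa>: "class_Kinf \<kappa>"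
    and bound: "\<And>x u t. u \<in> Uset \<Longrightarrow> t \<in> T \<Longrightarrow> norm (outp \<phi> h t x u) \<le> \<rho> (norm x) + \<kappa> (nU u)"
  obtains \<gamma> where "class_Kinf \<gamma>"
    "\<And>\<epsilon> R. 0 < \<epsilon> \<Longrightarrow> \<exists>\<tau>. \<forall>x. \<forall>u\<in>Uset. \<forall>t\<in>T. norm x \<le> R \<longrightarrow> \<tau> \<le> t \<longrightarrow>
      norm (outp \<phi> h t x u) \<le> \<epsilon> + (\<gamma> (nU u) + \<kappa> (nU u) + \<kappa> (nU u))"
proof -
  obtain \<gamma> where \<gamma>: "class_Kinf \<gamma>" and OUAG: "\<forall>\<epsilon>>0. \<forall>r>0. \<forall>s>0. \<exists>\<tau>\<in>T. \<forall>x. \<forall>u\<in>Uset. \<forall>t\<in>T.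
      norm x < r \<longrightarrow> nU u < s \<longrightarrow> \<tau> \<le> t \<longrightarrow> norm (outp \<phi> h t x u) \<le> \<epsilon> + \<gamma> (nU u)"
    using assms(1) unfolding OUAG_def by blast
  show ?thesis
  proof (rule that[OF \<gamma>])
    fix \<epsilon> R :: real assume "0 < \<epsilon>"
    \<comment> \<open>Inputs too large for OUAG are those with \<open>\<rho> R \<le> \<kappa> (nU u)\<close>, where \<open>bound\<close> suffices.\<close>
    obtain s0 where s0: "\<And>s. s0 \<le> s \<Longrightarrow> \<rho> R \<le> \<kappa> s"
      using \<kappa> unfolding class_Kinf_def filterlim_at_top eventually_at_top_linorder by blast
    have pos: "0 < max R 0 + 1" "0 < max s0 0 + 1" by auto
    obtain \<tau> where \<tau>: "\<forall>x. \<forall>u\<in>Uset. \<forall>t\<in>T. norm x < max R 0 + 1 \<longrightarrow> nU u < max s0 0 + 1 \<longrightarrow>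
        \<tau> \<le> t \<longrightarrow> norm (outp \<phi> h t x u) \<le> \<epsilon> + \<gamma> (nU u)"
      using OUAG[rule_format, OF \<open>0 < \<epsilon>\<close> pos] by blast
    have "norm (outp \<phi> h t x u) \<le> \<epsilon> + (\<gamma> (nU u) + \<kappa> (nU u) + \<kappa> (nU u))"
      if u: "u \<in> Uset" and t: "t \<in> T" "\<tau> \<le> t" and x: "norm x \<le> R" for x u t
    proof -
      have nonneg: "0 \<le> \<gamma> (nU u)" "0 \<le> \<kappa> (nU u)"
        using class_K_nonneg[OF class_Kinf_imp_class_K] \<gamma> \<kappa> fc_input_norm_nonneg[OF u] by blast+
      show ?thesis
      proof (cases "nU u < max s0 0 + 1")
        case True
        then have "norm (outp \<phi> h t x u) \<le> \<epsilon> + \<gamma> (nU u)" using \<tau> u t x by auto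
        then show ?thesis using nonneg by simp
      next
        case False
        have "norm (outp \<phi> h t x u) \<le> \<rho> (norm x) + \<kappa> (nU u)" using bound[OF u t(1)] .
        also have "\<rho> (norm x) \<le> \<rho> R" using x by (intro class_K_mono[OF \<rho>]) auto
        also have "\<rho> R \<le> \<kappa> (nU u)" using False by (intro s0) linarith
        finally show ?thesis using nonneg \<open>0 < \<epsilon>\<close> by simp
      qed
    qed
    then show "\<exists>\<tau>. \<forall>x. \<forall>u\<in>Uset. \<forall>t\<in>T. norm x \<le> R \<longrightarrow> \<tau> \<le> t \<longrightarrow>
        norm (outp \<phi> h t x u) \<le> \<epsilon> + (\<gamma> (nU u) + \<kappa> (nU u) + \<kappa> (nU u))"
      by blast
  qed
qed

lemma OUAG_OL_K_bounded_imp_uniform_decay: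
  assumes "OUAG T Uset nU \<phi> h" "OL T Uset nU \<phi> h" "K_bounded Uset nU h"
  obtains \<rho> \<Gamma> where "class_K \<rho>" "class_Kinf \<Gamma>"
    "\<And>x u t. u \<in> Uset \<Longrightarrow> t \<in> T \<Longrightarrow> norm (outp \<phi> h t x u) \<le> \<rho> (norm x) + \<Gamma> (nU u)"
    "\<And>\<epsilon> R. 0 < \<epsilon> \<Longrightarrow> \<exists>\<tau>. \<forall>x. \<forall>u\<in>Uset. \<forall>t\<in>T. norm x \<le> R \<longrightarrow> \<tau> \<le> t \<longrightarrow>
      norm (outp \<phi> h t x u) \<le> \<epsilon> + \<Gamma> (nU u)"
proof -
  obtain \<rho> \<kappa> where \<rho>: "class_K \<rho>" and \<kappa>: "class_Kinf \<kappa>"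
    and bound: "\<And>x u t. u \<in> Uset \<Longrightarrow> t \<in> T \<Longrightarrow> norm (outp \<phi> h t x u) \<le> \<rho> (norm x) + \<kappa> (nU u)"
    using OL_K_bounded_imp_output_bound[OF assms(2,3)] by blast
  obtain \<gamma> where \<gamma>: "class_Kinf \<gamma>"
    and decay: "\<And>\<epsilon> R. 0 < \<epsilon> \<Longrightarrow> \<exists>\<tau>. \<forall>x. \<forall>u\<in>Uset. \<forall>t\<in>T. norm x \<le> R \<longrightarrow> \<tau> \<le> t \<longrightarrow>
      norm (outp \<phi> h t x u) \<le> \<epsilon> + (\<gamma> (nU u) + \<kappa> (nU u) + \<kappa> (nU u))"
    using OUAG_output_bound_imp_uniform_decay[OF assms(1) \<rho> \<kappa> bound] by blast
  define \<Gamma> where "\<Gamma> s = \<gamma> s + \<kappa> s + \<kappa> s" for s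
  show ?thesis
  proof (rule that[OF \<rho>])
    show "class_Kinf \<Gamma>"
      unfolding \<Gamma>_def using class_Kinf_imp_class_K[OF \<kappa>]
      by (intro class_Kinf_add[OF class_Kinf_add[OF \<gamma>]])
    show "norm (outp \<phi> h t x u) \<le> \<rho> (norm x) + \<Gamma> (nU u)" if "u \<in> Uset" "t \<in> T" for x u t
      using bound[OF that, of x] class_K_nonneg[OF class_Kinf_imp_class_K[OF \<gamma>]]
        class_K_nonneg[OF class_Kinf_imp_class_K[OF \<kappa>]] fc_input_norm_nonneg[OF that(1)]
      unfolding \<Gamma>_def by fastforce
    show "\<exists>\<tau>. \<forall>x. \<forall>u\<in>Uset. \<forall>t\<in>T. norm x \<le> R \<longrightarrow> \<tau> \<le> t \<longrightarrow>
        norm (outp \<phi> h t x u) \<le> \<epsilon> + \<Gamma> (nU u)" if "0 < \<epsilon>" for \<epsilon> R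
      using decay[OF that] unfolding \<Gamma>_def .
  qed
qed

lemma OUAG_OL_K_bounded_imp_IOS:
  assumes "OUAG T Uset nU \<phi> h" "OL T Uset nU \<phi> h" "K_bounded Uset nU h"
  shows "IOS T Uset nU \<phi> h"
proof -
  obtain \<rho> \<Gamma> where \<rho>: "class_K \<rho>" and \<Gamma>: "class_Kinf \<Gamma>"
    and bound: "\<And>x u t. u \<in> Uset \<Longrightarrow> t \<in> T \<Longrightarrow> norm (outp \<phi> h t x u) \<le> \<rho> (norm x) + \<Gamma> (nU u)"
    and decay: "\<And>\<epsilon> R. 0 < \<epsilon> \<Longrightarrow> \<exists>\<tau>. \<forall>x. \<forall>u\<in>Uset. \<forall>t\<in>T. norm x \<le> R \<longrightarrow> \<tau> \<le> t \<longrightarrow>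
      norm (outp \<phi> h t x u) \<le> \<epsilon> + \<Gamma> (nU u)"
    using OUAG_OL_K_bounded_imp_uniform_decay[OF assms] by blast
  define S :: "(real \<times> 'x \<times> (real \<Rightarrow> 'u)) set" where "S = {(t, x, u). t \<in> T \<and> u \<in> Uset}"
  define v where "v = (\<lambda>(t, x, u). norm (outp \<phi> h t x u) - \<Gamma> (nU u))"
  define nx :: "real \<times> 'x \<times> (real \<Rightarrow> 'u) \<Rightarrow> real" where "nx = (\<lambda>(t, x, u). norm x)"
  have "uniformly_decaying S v nx fst \<rho>"
  proof
    show "class_K \<rho>" by (fact \<rho>)
    fix p assume "p \<in> S"
    then obtain t x u where p: "p = (t, x, u)" "t \<in> T" "u \<in> Uset" unfolding S_def by auto
    show "0 \<le> nx p \<and> 0 \<le> fst p" using p fc_time_nonneg by (simp add: nx_def)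
    show "v p \<le> \<rho> (nx p)" using bound[OF p(3,2), of x] by (simp add: p v_def nx_def)
  next
    fix \<epsilon> R :: real assume "0 < \<epsilon>"
    then show "\<exists>\<tau>. \<forall>p\<in>S. nx p \<le> R \<longrightarrow> \<tau> \<le> fst p \<longrightarrow> v p \<le> \<epsilon>"
      using decay[of \<epsilon> R] by (fastforce simp: S_def v_def nx_def)
  qed
  then obtain \<beta> where "class_KL \<beta>" and \<beta>: "\<forall>p\<in>S. v p \<le> \<beta> (nx p) (fst p)"
    using uniformly_decaying.KL_bound by blast
  have "norm (outp \<phi> h t x u) \<le> \<beta> (norm x) t + \<Gamma> (nU u)" if "u \<in> Uset" "t \<in> T" for x u t
    using \<beta>[rule_format, of "(t, x, u)"] that by (simp add: S_def v_def nx_def)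
  with \<open>class_KL \<beta>\<close> \<Gamma> show ?thesis unfolding IOS_def by blast
qed

end

theorem proposition2:
  fixes T :: "real set"
    and Uset :: "(real \<Rightarrow> 'u::real_vector) set"
    and nU :: "(real \<Rightarrow> 'u) \<Rightarrow> real"
    and \<phi> :: "real \<Rightarrow> 'x::real_normed_vector \<Rightarrow> (real \<Rightarrow> 'u) \<Rightarrow> 'x"
    and h :: "'x \<Rightarrow> 'u \<Rightarrow> 'y::real_normed_vector"
  assumes "fc_control_system T Uset nU \<phi>"
  shows "(IOS T Uset nU \<phi> h \<and> OL T Uset nU \<phi> h
            \<longleftrightarrow> OUAG T Uset nU \<phi> h \<and> OL T Uset nU \<phi> h \<and> K_bounded Uset nU h)
       \<and> (OUAG T Uset nU \<phi> h \<and> OL T Uset nU \<phi> h \<and> K_bounded Uset nU h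
            \<longleftrightarrow> OULIM T Uset nU \<phi> h \<and> OL T Uset nU \<phi> h \<and> K_bounded Uset nU h)"
  using IOS_imp_OUAG[OF assms] IOS_imp_K_bounded[OF assms] OUAG_OL_K_bounded_imp_IOS[OF assms]
    OUAG_imp_OULIM[OF assms] OULIM_OL_imp_OUAG[OF assms]
  by blast

end
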